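(* Let $Q$ be a Jordan loop and $x\in Q$. Then (i) $x^2x^{-1}=x$; (ii) $x^4x^{-1}=x^3$; (iii) if $x^3x^8=x^{11}$, then $x^8x^{-1}=x^7$.
   Context: A loop is a set $Q$ with a binary operation (juxtaposition) and neutral element $e$ such that for all $a,b$ the equations $ax=b$, $ya=b$ have unique solutions. A Jordan loop is a commutative loop satisfying $x^2(yx)=(x^2y)x$. For $k\ge 0$, $x^k$ denotes the right-associated product $x(x(\cdots(xe)\cdots))$ with $k$ factors $x$. Since the loop is commutative, each $x$ has a unique inverse $x^{-1}$ with $xx^{-1}=x^{-1}x=e$. *)

theory Defs
  imports Main
begin

definition loop :: "'a set \<Rightarrow> ('a \<Rightarrow> 'a \<Rightarrow> 'a) \<Rightarrow> 'a \<Rightarrow> bool" where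
  "loop Q m e \<longleftrightarrow>
     (\<forall>a\<in>Q. \<forall>b\<in>Q. m a b \<in> Q) \<and> e \<in> Q \<and>
     (\<forall>a\<in>Q. m e a = a \<and> m a e = a) \<and>
     (\<forall>a\<in>Q. \<forall>b\<in>Q. \<exists>!x. x \<in> Q \<and> m a x = b) \<and>
     (\<forall>a\<in>Q. \<forall>b\<in>Q. \<exists>!y. y \<in> Q \<and> m y a = b)"

definition jordan_loop :: "'a set \<Rightarrow> ('a \<Rightarrow> 'a \<Rightarrow> 'a) \<Rightarrow> 'a \<Rightarrow> bool" where
  "jordan_loop Q m e \<longleftrightarrow> loop Q m e \<and>
     (\<forall>x\<in>Q. \<forall>y\<in>Q. m x y = m y x) \<and>
     (\<forall>x\<in>Q. \<forall>y\<in>Q. m (m x x) (m y x) = m (m (m x x) y) x)"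

fun lpow :: "('a \<Rightarrow> 'a \<Rightarrow> 'a) \<Rightarrow> 'a \<Rightarrow> 'a \<Rightarrow> nat \<Rightarrow> 'a" where
  "lpow m e x 0 = e"
| "lpow m e x (Suc k) = m x (lpow m e x k)"

definition linv :: "'a set \<Rightarrow> ('a \<Rightarrow> 'a \<Rightarrow> 'a) \<Rightarrow> 'a \<Rightarrow> 'a \<Rightarrow> 'a" where
  "linv Q m e x = (THE y. y \<in> Q \<and> m x y = e)"

end

theory Submission
  imports Defs
begin

text \<open>Under commutativity the Jordan identity says that left multiplication by \<open>a a\<close> commutes
  with left multiplication by \<open>a\<close>. For \<open>a = x\<close> this gives \<open>x^(k+2) = x^2 x^k\<close>; for \<open>a = x^2\<close>
  it then gives \<open>x^(k+4) = x^4 x^k\<close>. For \<open>n = 1, 2, 4\<close> the identity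
  \<open>x^n (x^(2n) x\<inverse>) = x^(2n) (x^n x\<inverse>)\<close> together with the case \<open>n/2\<close> (or \<open>x x\<inverse> = e\<close>)
  yields \<open>x^n (x^(2n) x\<inverse>) = x^n x^(2n-1)\<close>, and left cancellation gives \<open>x^(2n) x\<inverse> = x^(2n-1)\<close>.
  For \<open>n = 4\<close> the right-hand side is \<open>x^8 x^3\<close>, which only the hypothesis of (iii) identifies
  with \<open>x^11 = x^4 x^7\<close>.\<close>

locale loop_on =
  fixes Q :: "'a set" and mult :: "'a \<Rightarrow> 'a \<Rightarrow> 'a" (infixl "\<cdot>" 70) and e :: 'a
  assumes loop: "loop Q (\<cdot>) e"
begin

abbreviation pow :: "'a \<Rightarrow> nat \<Rightarrow> 'a" where
  "pow x k \<equiv> lpow (\<cdot>) e x k"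

lemma mult_closed: "a \<in> Q \<Longrightarrow> b \<in> Q \<Longrightarrow> a \<cdot> b \<in> Q"
  using loop unfolding loop_def by simp

lemma unit_closed: "e \<in> Q"
  using loop unfolding loop_def by simp

lemma right_unit: "a \<in> Q \<Longrightarrow> a \<cdot> e = a"
  using loop unfolding loop_def by simp

lemma left_division_unique: "a \<in> Q \<Longrightarrow> b \<in> Q \<Longrightarrow> \<exists>!z. z \<in> Q \<and> a \<cdot> z = b"
  using loop unfolding loop_def by simp

lemma left_cancel:
  assumes "a \<in> Q" "u \<in> Q" "v \<in> Q" "a \<cdot> u = a \<cdot> v"
  shows "u = v"
proof -
  have unique: "\<exists>!z. z \<in> Q \<and> a \<cdot> z = a \<cdot> u"
    using assms by (simp add: left_division_unique mult_closed)
  have "(THE z. z \<in> Q \<and> a \<cdot> z = a \<cdot> u) = u"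
    using the1_equality[OF unique] \<open>u \<in> Q\<close> by simp
  moreover have "(THE z. z \<in> Q \<and> a \<cdot> z = a \<cdot> u) = v"
    using the1_equality[OF unique] \<open>v \<in> Q\<close> \<open>a \<cdot> u = a \<cdot> v\<close> by simp
  ultimately show ?thesis by simp
qed

lemma lpow_closed: "x \<in> Q \<Longrightarrow> pow x k \<in> Q"
  by (induction k) (simp_all add: unit_closed mult_closed)

lemma lpow_1: "x \<in> Q \<Longrightarrow> pow x 1 = x"
  by (simp add: right_unit)

lemma lpow_2: "x \<in> Q \<Longrightarrow> pow x 2 = x \<cdot> x"
  by (simp add: numeral_2_eq_2 right_unit)

lemma linv_closed: "x \<in> Q \<Longrightarrow> linv Q (\<cdot>) e x \<in> Q"
  and right_inverse: "x \<in> Q \<Longrightarrow> x \<cdot> linv Q (\<cdot>) e x = e"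
  using theI'[OF left_division_unique[OF _ unit_closed]] unfolding linv_def by simp_all

end

locale Jordan_loop = loop_on +
  assumes commute: "a \<in> Q \<Longrightarrow> b \<in> Q \<Longrightarrow> a \<cdot> b = b \<cdot> a"
    and jordan: "a \<in> Q \<Longrightarrow> b \<in> Q \<Longrightarrow> (a \<cdot> a) \<cdot> (b \<cdot> a) = ((a \<cdot> a) \<cdot> b) \<cdot> a"
begin

lemma square_left_commute:
  assumes "a \<in> Q" "y \<in> Q"
  shows "(a \<cdot> a) \<cdot> (a \<cdot> y) = a \<cdot> ((a \<cdot> a) \<cdot> y)"
proof -
  have "(a \<cdot> a) \<cdot> (a \<cdot> y) = ((a \<cdot> a) \<cdot> y) \<cdot> a"
    using assms by (simp add: commute[of a y] jordan)
  also have "\<dots> = a \<cdot> ((a \<cdot> a) \<cdot> y)"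
    using assms by (simp add: commute mult_closed)
  finally show ?thesis .
qed

lemma lpow_add_2:
  assumes "x \<in> Q"
  shows "pow x (k + 2) = pow x 2 \<cdot> pow x k"
proof (induction k)
  case 0
  show ?case using assms by (simp add: lpow_closed right_unit lpow_2 mult_closed)
next
  case (Suc k)
  have "pow x (Suc k + 2) = x \<cdot> ((x \<cdot> x) \<cdot> pow x k)"
    using Suc assms by (simp add: lpow_2)
  also have "\<dots> = (x \<cdot> x) \<cdot> pow x (Suc k)"
    using assms by (simp add: square_left_commute lpow_closed)
  finally show ?case using assms by (simp add: lpow_2)
qed

lemma lpow_4_left_commute:
  assumes "x \<in> Q" "y \<in> Q"
  shows "pow x 4 \<cdot> (pow x 2 \<cdot> y) = pow x 2 \<cdot> (pow x 4 \<cdot> y)"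
  using square_left_commute[OF lpow_closed[OF \<open>x \<in> Q\<close>] \<open>y \<in> Q\<close>] lpow_add_2[OF \<open>x \<in> Q\<close>, of 2]
  by simp

lemma lpow_4_mult:
  assumes "x \<in> Q"
  shows "pow x 4 \<cdot> pow x k = pow x (k + 4)"
proof (induction k rule: nat_induct2)
  case 0
  show ?case using assms by (simp add: lpow_closed right_unit)
next
  case 1
  have "pow x 4 \<cdot> x = x \<cdot> pow x 4"
    using assms by (simp add: commute lpow_closed)
  then show ?case
    using assms lpow.simps(2)[of "(\<cdot>)" e x 4] by (simp add: right_unit)
next
  case (step k)
  have "pow x 4 \<cdot> pow x (k + 2) = pow x 4 \<cdot> (pow x 2 \<cdot> pow x k)"
    by (simp only: lpow_add_2[OF assms])
  also have "\<dots> = pow x 2 \<cdot> (pow x 4 \<cdot> pow x k)"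
    by (rule lpow_4_left_commute[OF assms lpow_closed[OF assms]])
  also have "\<dots> = pow x (k + 4 + 2)"
    by (simp only: step lpow_add_2[OF assms])
  finally show ?case
    by (simp only: add.commute add.left_commute)
qed

lemma lpow_2_mult_linv:
  assumes "x \<in> Q"
  shows "pow x 2 \<cdot> linv Q (\<cdot>) e x = x"
proof (rule left_cancel[OF assms])
  have "x \<cdot> ((x \<cdot> x) \<cdot> linv Q (\<cdot>) e x) = (x \<cdot> x) \<cdot> (x \<cdot> linv Q (\<cdot>) e x)"
    using square_left_commute[OF assms linv_closed[OF assms]] by (rule sym)
  also have "\<dots> = x \<cdot> x"
    using assms by (simp add: right_inverse right_unit mult_closed)
  finally show "x \<cdot> (pow x 2 \<cdot> linv Q (\<cdot>) e x) = x \<cdot> x"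
    using assms by (simp add: lpow_2)
qed (use assms in \<open>simp_all add: mult_closed lpow_closed linv_closed\<close>)

lemma lpow_4_mult_linv:
  assumes "x \<in> Q"
  shows "pow x 4 \<cdot> linv Q (\<cdot>) e x = pow x 3"
proof (rule left_cancel[OF lpow_closed[OF assms, of 2]])
  have "pow x 2 \<cdot> (pow x 4 \<cdot> linv Q (\<cdot>) e x) = pow x 4 \<cdot> (pow x 2 \<cdot> linv Q (\<cdot>) e x)"
    using lpow_4_left_commute[OF assms linv_closed[OF assms]] by (rule sym)
  also have "\<dots> = pow x 4 \<cdot> pow x 1"
    by (simp only: lpow_2_mult_linv[OF assms] lpow_1[OF assms])
  also have "\<dots> = pow x (1 + 4)"
    by (rule lpow_4_mult[OF assms])
  also have "\<dots> = pow x (3 + 2)"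
    by simp
  also have "\<dots> = pow x 2 \<cdot> pow x 3"
    by (rule lpow_add_2[OF assms])
  finally show "pow x 2 \<cdot> (pow x 4 \<cdot> linv Q (\<cdot>) e x) = pow x 2 \<cdot> pow x 3" .
qed (use assms in \<open>simp_all add: mult_closed lpow_closed linv_closed\<close>)

lemma lpow_8_mult_linv:
  assumes "x \<in> Q" and "pow x 3 \<cdot> pow x 8 = pow x 11"
  shows "pow x 8 \<cdot> linv Q (\<cdot>) e x = pow x 7"
proof (rule left_cancel[OF lpow_closed[OF \<open>x \<in> Q\<close>, of 4]])
  have "pow x 8 = pow x (4 + 4)"
    by simp
  also have "\<dots> = pow x 4 \<cdot> pow x 4"
    by (rule lpow_4_mult[OF \<open>x \<in> Q\<close>, symmetric])
  finally have square: "pow x 8 = pow x 4 \<cdot> pow x 4" .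
  have "pow x 4 \<cdot> (pow x 8 \<cdot> linv Q (\<cdot>) e x) = pow x 8 \<cdot> (pow x 4 \<cdot> linv Q (\<cdot>) e x)"
    unfolding square by (rule square_left_commute[OF lpow_closed linv_closed, symmetric]) fact+
  also have "\<dots> = pow x 3 \<cdot> pow x 8"
    using \<open>x \<in> Q\<close> by (simp add: lpow_4_mult_linv commute lpow_closed)
  also have "\<dots> = pow x (7 + 4)"
    using assms(2) by simp
  also have "\<dots> = pow x 4 \<cdot> pow x 7"
    by (rule lpow_4_mult[OF \<open>x \<in> Q\<close>, symmetric])
  finally show "pow x 4 \<cdot> (pow x 8 \<cdot> linv Q (\<cdot>) e x) = pow x 4 \<cdot> pow x 7" .
qed (use assms in \<open>simp_all add: mult_closed lpow_closed linv_closed\<close>)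

end

theorem lemma2p5:
  fixes Q :: "'a set" and m :: "'a \<Rightarrow> 'a \<Rightarrow> 'a" and e x :: 'a
  assumes "jordan_loop Q m e" and "x \<in> Q"
  shows "m (lpow m e x 2) (linv Q m e x) = x
         \<and> m (lpow m e x 4) (linv Q m e x) = lpow m e x 3
         \<and> (m (lpow m e x 3) (lpow m e x 8) = lpow m e x 11 \<longrightarrow>
              m (lpow m e x 8) (linv Q m e x) = lpow m e x 7)"
proof -
  interpret Jordan_loop Q m e
    using assms(1) unfolding jordan_loop_def by unfold_locales blast+
  show ?thesis
    using assms(2) lpow_2_mult_linv lpow_4_mult_linv lpow_8_mult_linv by simp
qed

end
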